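(* Let $T:\mathcal{S}_n\to\mathcal{S}_n$ be a bijective isometry with respect to the Hausdorff distance, and let $(K_0,K_1)$ be an $\mathcal{S}_n$-cute pair. Then $(TK_0,TK_1)$ is an $\mathcal{S}_n$-cute pair, and moreover $T\left(\tfrac12 K_0+\tfrac12 K_1\right)=\tfrac12\left(T(K_0)+T(K_1)\right)$.
   Context: Convex bodies are compact convex non-empty subsets of $\mathbb{R}^n$; $B_2^n$ is the closed Euclidean unit ball; $\delta$ is the Hausdorff distance $\delta(K_0,K_1)=\inf\{\lambda>0: K_0\subseteq K_1+\lambda B_2^n,\ K_1\subseteq K_0+\lambda B_2^n\}$. $\mathcal{S}_n$ is the set of convex bodies in $\mathbb{R}^n$ which are intersections of Euclidean unit balls. A pair $(K_0,K_1)\in\mathcal{S}_n\times\mathcal{S}_n$ is called $\mathcal{S}_n$-cute if $M=\frac{K_0+K_1}{2}$ (Minkowski average, which lies in $\mathcal{S}_n$) is the unique body in $\mathcal{S}_n$ satisfying $\delta(K_0,M)=\frac12\delta(K_0,K_1)$ and $\delta(K_1,M)=\frac12\delta(K_0,K_1)$. *)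

theory Defs
  imports "HOL-Analysis.Analysis"
begin

definition convex_body :: "'a::euclidean_space set \<Rightarrow> bool" where
  "convex_body K \<longleftrightarrow> compact K \<and> convex K \<and> K \<noteq> {}"

definition ball_bodies :: "'a::euclidean_space set set" where
  "ball_bodies = {K. convex_body K \<and> (\<exists>X. K = (\<Inter>x\<in>X. cball x 1))}"

definition mink_avg :: "'a::euclidean_space set \<Rightarrow> 'a set \<Rightarrow> 'a set" where
  "mink_avg K0 K1 = (\<lambda>z. (1/2::real) *\<^sub>R z) ` {a + b | a b. a \<in> K0 \<and> b \<in> K1}"

definition hausdorff_distance :: "'a::euclidean_space set \<Rightarrow> 'a set \<Rightarrow> real" where
  "hausdorff_distance K0 K1 = Inf {r::real. r > 0 \<and>
     K0 \<subseteq> {a + b | a b. a \<in> K1 \<and> b \<in> cball 0 r} \<and>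
     K1 \<subseteq> {a + b | a b. a \<in> K0 \<and> b \<in> cball 0 r}}"

definition cute_pair :: "'a::euclidean_space set \<Rightarrow> 'a set \<Rightarrow> bool" where
  "cute_pair K0 K1 \<longleftrightarrow> K0 \<in> ball_bodies \<and> K1 \<in> ball_bodies \<and>
     (\<forall>M\<in>ball_bodies.
        (hausdorff_distance K0 M = hausdorff_distance K0 K1 / 2 \<and>
         hausdorff_distance K1 M = hausdorff_distance K0 K1 / 2)
        \<longleftrightarrow> M = mink_avg K0 K1)"

end

theory Submission
  imports Defs
begin

(* A bijective isometry T of S_n maps the Hausdorff midpoints of K0, K1 in S_n (the bodies of
   S_n at distance d(K0,K1)/2 from both) onto those of T K0, T K1. For a cute pair the former
   set is {(K0 + K1)/2}, so the latter is {T ((K0 + K1)/2)}. The Minkowski average of two convex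
   bodies is always a Hausdorff midpoint (convexity and the triangle inequality), so once
   (T K0 + T K1)/2 is known to lie in S_n it must be T ((K0 + K1)/2), and T K0, T K1 is cute.

   S_n is closed under Minkowski averages because of the supporting-ball property: if k maximises
   the unit functional u on K in S_n, then K lies in the unit ball centred at k - u. Otherwise
   some y in K is far from k - u, and the spindle of k and y (the intersection of all unit balls
   containing both), which lies in K, crosses the supporting hyperplane at k. Conversely, by
   separation, a convex body with supporting unit balls in every direction lies in S_n. *)

section \<open>Spindles and supporting unit balls\<close>

lemma power2_norm_convex_combination:
  fixes x y :: "'a::real_inner"
  shows "(norm ((1 - l) *\<^sub>R x + l *\<^sub>R y))\<^sup>2
    = (1 - l) * (norm x)\<^sup>2 + l * (norm y)\<^sup>2 - l * (1 - l) * (norm (x - y))\<^sup>2"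
  unfolding power2_norm_eq_inner
  by (simp add: inner_add_left inner_add_right inner_diff_left inner_diff_right inner_commute
      algebra_simps power2_eq_square)

lemma exists_spindle_step:
  fixes a g :: real
  assumes "0 \<le> g" "2 * g < a"
  obtains l s where "0 < l" "l < 1" "l * g < s" "2 * s + s\<^sup>2 \<le> l * (1 - l) * a"
proof -
  \<comment> \<open>s is the midpoint of l g and l a / 2; l is small enough to absorb the quadratic terms\<close>
  define Q where "Q = (a + 2 * g)\<^sup>2 / 16 + a"
  define l where "l = min (1/2) ((a - 2 * g) / (2 * Q))"
  define s where "s = l * (a + 2 * g) / 4"
  have "0 < Q" using assms unfolding Q_def by (simp add: add_nonneg_pos)
  then have l: "0 < l" "l < 1" "l * Q \<le> (a - 2 * g) / 2"
    using assms unfolding l_def by (auto simp: min_def field_simps)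
  have "l * g < s" using l assms unfolding s_def by (simp add: algebra_simps)
  moreover have "2 * s + s\<^sup>2 \<le> l * (1 - l) * a"
  proof -
    have "2 * s + s\<^sup>2 = l * (1 - l) * a - (l * ((a - 2 * g) / 2) - l * (l * Q))"
      unfolding s_def Q_def by (simp add: field_simps power2_eq_square)
    moreover have "l * (l * Q) \<le> l * ((a - 2 * g) / 2)" using l by (intro mult_left_mono) auto
    ultimately show ?thesis by linarith
  qed
  ultimately show ?thesis using l that by blast
qed

lemma norm_shifted_segment_point_le_1:
  fixes c w u :: "'a::real_inner"
  assumes c: "norm c \<le> 1" "norm (c - w) \<le> 1" and u: "norm u = 1"
    and l: "0 \<le> l" "l \<le> 1" and s: "0 \<le> s" "2 * s + s\<^sup>2 \<le> l * (1 - l) * (norm w)\<^sup>2"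
  shows "norm (c - l *\<^sub>R w - s *\<^sub>R u) \<le> 1"
proof -
  define t where "t = norm (c - l *\<^sub>R w)"
  have "(norm c)\<^sup>2 \<le> 1" "(norm (c - w))\<^sup>2 \<le> 1"
    using c by (simp_all add: abs_square_le_1)
  then have "(1 - l) * (norm c)\<^sup>2 + l * (norm (c - w))\<^sup>2 \<le> 1"
    using l mult_left_le[of "(norm c)\<^sup>2" "1 - l"] mult_left_le[of "(norm (c - w))\<^sup>2" l] by linarith
  moreover have "t\<^sup>2 = (1 - l) * (norm c)\<^sup>2 + l * (norm (c - w))\<^sup>2 - l * (1 - l) * (norm w)\<^sup>2"
    using power2_norm_convex_combination[of l c "c - w"] unfolding t_def by (simp add: algebra_simps)
  ultimately have t2: "t\<^sup>2 \<le> 1 - l * (1 - l) * (norm w)\<^sup>2" by linarith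
  have "0 \<le> l * (1 - l) * (norm w)\<^sup>2" using l by simp
  then have "t\<^sup>2 \<le> 1" using t2 by linarith
  then have "t \<le> 1" by (simp add: t_def abs_square_le_1)
  have "(t + s)\<^sup>2 = t\<^sup>2 + 2 * s * t + s\<^sup>2" by (simp add: power2_sum)
  also have "\<dots> \<le> t\<^sup>2 + 2 * s + s\<^sup>2" using \<open>t \<le> 1\<close> s mult_left_le[of t "2 * s"] by linarith
  also have "\<dots> \<le> 1" using t2 s by linarith
  finally have "t + s \<le> 1" using s unfolding t_def by (simp add: abs_square_le_1)
  moreover have "norm (c - l *\<^sub>R w - s *\<^sub>R u) \<le> t + s"
    using norm_triangle_ineq4[of "c - l *\<^sub>R w" "s *\<^sub>R u"] u s unfolding t_def by simp
  ultimately show ?thesis by linarith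
qed

definition spindle :: "'a::metric_space \<Rightarrow> 'a \<Rightarrow> 'a set" where
  "spindle a b = (\<Inter>c\<in>{c. a \<in> cball c 1 \<and> b \<in> cball c 1}. cball c 1)"

lemma spindle_subset_Inter_cball:
  assumes "a \<in> (\<Inter>x\<in>X. cball x 1)" "b \<in> (\<Inter>x\<in>X. cball x 1)"
  shows "spindle a b \<subseteq> (\<Inter>x\<in>X. cball x 1)"
  unfolding spindle_def using assms by (intro INF_superset_mono) auto

lemma spindle_crosses_supporting_hyperplane:
  fixes a b u :: "'a::real_inner"
  assumes u: "norm u = 1" and far: "1 < dist b (a - u)"
  obtains z where "z \<in> spindle a b" "inner a u < inner z u"
proof (cases "inner a u < inner b u")
  case True
  moreover have "b \<in> spindle a b" by (simp add: spindle_def)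
  ultimately show ?thesis using that by blast
next
  case False
  define w where "w = b - a"
  define g where "g = - inner w u"
  have "0 \<le> g" using False by (simp add: g_def w_def inner_diff_left)
  have "1 < (norm (w + u))\<^sup>2"
    using far unfolding w_def dist_norm by (simp add: algebra_simps one_less_power)
  moreover have "(norm (w + u))\<^sup>2 = (norm w)\<^sup>2 - 2 * g + 1"
    using u unfolding g_def power2_norm_eq_inner
    by (simp add: inner_add_left inner_add_right inner_commute norm_eq_1)
  ultimately have "2 * g < (norm w)\<^sup>2" by simp
  then obtain l s where l: "0 < l" "l < 1" and s: "l * g < s"
    and step: "2 * s + s\<^sup>2 \<le> l * (1 - l) * (norm w)\<^sup>2"
    using exists_spindle_step \<open>0 \<le> g\<close> by blast
  define z where "z = a + l *\<^sub>R w + s *\<^sub>R u"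
  have "inner z u = inner a u - l * g + s"
    using u unfolding z_def g_def by (simp add: inner_add_left power2_norm_eq_inner[symmetric])
  then have "inner a u < inner z u" using s by simp
  moreover have "z \<in> spindle a b"
    unfolding spindle_def
  proof (intro INT_I, clarify)
    fix c assume "a \<in> cball c 1" "b \<in> cball c 1"
    then have "norm (c - a) \<le> 1" "norm (c - a - w) \<le> 1"
      unfolding w_def by (auto simp: dist_norm)
    moreover have "0 \<le> s" using s l \<open>0 \<le> g\<close> mult_nonneg_nonneg[of l g] by linarith
    ultimately have "norm (c - a - l *\<^sub>R w - s *\<^sub>R u) \<le> 1"
      using l step u by (intro norm_shifted_segment_point_le_1) simp_all
    then show "z \<in> cball c 1" unfolding z_def by (simp add: dist_norm algebra_simps)
  qed
  ultimately show ?thesis using that by blast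
qed

lemma Inter_cball_subset_supporting_cball:
  fixes u :: "'a::real_inner"
  assumes K: "K = (\<Inter>x\<in>X. cball x 1)" and "k \<in> K" and max: "\<forall>y\<in>K. inner y u \<le> inner k u"
    and u: "norm u = 1"
  shows "K \<subseteq> cball (k - u) 1"
proof
  fix y assume "y \<in> K"
  show "y \<in> cball (k - u) 1"
  proof (rule ccontr)
    assume "y \<notin> cball (k - u) 1"
    then have "1 < dist y (k - u)" by (simp add: dist_commute)
    then obtain z where "z \<in> spindle k y" "inner k u < inner z u"
      by (rule spindle_crosses_supporting_hyperplane[OF u])
    moreover have "spindle k y \<subseteq> K"
      using \<open>k \<in> K\<close> \<open>y \<in> K\<close> unfolding K by (rule spindle_subset_Inter_cball)
    ultimately show False using max by fastforce
  qed
qed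

section \<open>Minkowski averages of ball bodies\<close>

lemma mem_mink_avg: "z \<in> mink_avg K L \<longleftrightarrow> (\<exists>a\<in>K. \<exists>b\<in>L. z = (1/2::real) *\<^sub>R (a + b))"
  unfolding mink_avg_def by auto

lemma mink_avg_commute: "mink_avg K L = mink_avg L K"
proof -
  have "{a + b | a b. a \<in> K \<and> b \<in> L} = {b + a | a b. a \<in> L \<and> b \<in> K}" by blast
  then show ?thesis unfolding mink_avg_def by (simp add: add.commute)
qed

lemma convex_body_mink_avg:
  assumes "convex_body K" "convex_body L"
  shows "convex_body (mink_avg K L)"
proof -
  have sums: "{a + b | a b. a \<in> K \<and> b \<in> L} = (\<Union>x\<in>K. \<Union>y\<in>L. {x + y})" by blast
  have "convex (mink_avg K L)" "compact (mink_avg K L)"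
    using assms unfolding convex_body_def mink_avg_def sums
    by (simp_all add: convex_scaling convex_sums compact_scaling compact_sums')
  moreover obtain a b where "a \<in> K" "b \<in> L" using assms unfolding convex_body_def by blast
  then have "mink_avg K L \<noteq> {}" unfolding mink_avg_def by blast
  ultimately show ?thesis unfolding convex_body_def by blast
qed

lemma mink_avg_subset_cball:
  assumes "K \<subseteq> cball a r" "L \<subseteq> cball b r"
  shows "mink_avg K L \<subseteq> cball ((1/2::real) *\<^sub>R (a + b)) r"
proof
  fix z assume "z \<in> mink_avg K L"
  then obtain x y where xy: "x \<in> K" "y \<in> L" and z: "z = (1/2::real) *\<^sub>R (x + y)"
    unfolding mem_mink_avg by blast
  have "(1/2::real) *\<^sub>R (a + b) - z = (1/2::real) *\<^sub>R ((a - x) + (b - y))"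
    unfolding z by (simp add: algebra_simps)
  then have "dist ((1/2::real) *\<^sub>R (a + b)) z = norm ((a - x) + (b - y)) / 2"
    by (simp add: dist_norm)
  also have "\<dots> \<le> (dist a x + dist b y) / 2"
    unfolding dist_norm using norm_triangle_ineq by (intro divide_right_mono) auto
  also have "\<dots> \<le> r"
  proof -
    have "dist a x \<le> r" "dist b y \<le> r" using assms xy by auto
    then show ?thesis by simp
  qed
  finally show "z \<in> cball ((1/2::real) *\<^sub>R (a + b)) r" by simp
qed

lemma ball_bodies_supporting_cball:
  fixes K :: "'a::euclidean_space set"
  assumes "K \<in> ball_bodies" "norm u = 1"
  obtains k where "k \<in> K" "K \<subseteq> cball (k - u) 1"
proof -
  obtain X where X: "K = (\<Inter>x\<in>X. cball x 1)"
    using assms(1) unfolding ball_bodies_def by blast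
  have "compact K" "K \<noteq> {}" using assms(1) unfolding ball_bodies_def convex_body_def by auto
  moreover have "continuous_on K (\<lambda>y. inner y u)" by (intro continuous_intros)
  ultimately obtain k where "k \<in> K" "\<forall>y\<in>K. inner y u \<le> inner k u"
    using continuous_attains_sup by metis
  then show ?thesis using that Inter_cball_subset_supporting_cball[OF X _ _ assms(2)] by blast
qed

lemma separating_unit_vector_closed_point:
  fixes M :: "'a::euclidean_space set"
  assumes "convex M" "closed M" "M \<noteq> {}" "p \<notin> M"
  obtains u where "norm u = 1" "\<And>x. x \<in> M \<Longrightarrow> inner x u < inner p u"
proof -
  obtain a b where ab: "inner a p < b" "\<forall>x\<in>M. b < inner a x"
    using separating_hyperplane_closed_point[OF assms(1,2,4)] by blast
  have "a \<noteq> 0" using ab assms(3) by auto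
  define u where "u = - (1 / norm a) *\<^sub>R a"
  have "norm u = 1" unfolding u_def using \<open>a \<noteq> 0\<close> by simp
  moreover have "inner x u < inner p u" if "x \<in> M" for x
  proof -
    have "inner a p < inner a x" using ab that by force
    then have "inner a p / norm a < inner a x / norm a"
      using \<open>a \<noteq> 0\<close> by (simp add: divide_strict_right_mono)
    then show ?thesis unfolding u_def by (simp add: inner_commute)
  qed
  ultimately show ?thesis using that by blast
qed

lemma ball_bodiesI:
  fixes M :: "'a::euclidean_space set"
  assumes M: "convex_body M" and supp: "\<And>u. norm u = 1 \<Longrightarrow> \<exists>m\<in>M. M \<subseteq> cball (m - u) 1"
  shows "M \<in> ball_bodies"
proof -
  have "p \<in> M" if p: "p \<in> (\<Inter>c\<in>{c. M \<subseteq> cball c 1}. cball c 1)" for p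
  proof (rule ccontr)
    assume "p \<notin> M"
    then obtain u where u: "norm u = 1" and sep: "\<And>x. x \<in> M \<Longrightarrow> inner x u < inner p u"
      using M separating_unit_vector_closed_point[of M p]
      unfolding convex_body_def by (auto dest: compact_imp_closed)
    obtain m where "m \<in> M" "M \<subseteq> cball (m - u) 1" using supp[OF u] by blast
    then have "norm (p - (m - u)) \<le> 1"
      using p by (auto simp: dist_norm norm_minus_commute)
    moreover have "inner (p - (m - u)) u = inner p u - inner m u + 1"
      using u by (simp add: inner_diff_left norm_eq_1)
    then have "1 < inner (p - (m - u)) u" using sep[OF \<open>m \<in> M\<close>] by linarith
    moreover have "inner (p - (m - u)) u \<le> norm (p - (m - u))"
      using norm_cauchy_schwarz[of "p - (m - u)" u] u by simp
    ultimately show False by linarith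
  qed
  then have "M = (\<Inter>c\<in>{c. M \<subseteq> cball c 1}. cball c 1)" by blast
  then show ?thesis using M unfolding ball_bodies_def by (intro CollectI conjI exI)
qed

lemma mink_avg_in_ball_bodies:
  fixes K L :: "'a::euclidean_space set"
  assumes K: "K \<in> ball_bodies" and L: "L \<in> ball_bodies"
  shows "mink_avg K L \<in> ball_bodies"
proof (rule ball_bodiesI)
  show "convex_body (mink_avg K L)"
    using assms convex_body_mink_avg unfolding ball_bodies_def by blast
next
  fix u :: 'a assume u: "norm u = 1"
  obtain k where k: "k \<in> K" "K \<subseteq> cball (k - u) 1" using ball_bodies_supporting_cball[OF K u] .
  obtain l where l: "l \<in> L" "L \<subseteq> cball (l - u) 1" using ball_bodies_supporting_cball[OF L u] .
  have "mink_avg K L \<subseteq> cball ((1/2::real) *\<^sub>R ((k - u) + (l - u))) 1"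
    using k(2) l(2) by (rule mink_avg_subset_cball)
  moreover have "(1/2::real) *\<^sub>R ((k - u) + (l - u)) = (1/2::real) *\<^sub>R (k + l) - u"
    by (simp add: algebra_simps) (simp flip: scaleR_add_left)
  moreover have "(1/2::real) *\<^sub>R (k + l) \<in> mink_avg K L" using k l unfolding mem_mink_avg by blast
  ultimately show "\<exists>m\<in>mink_avg K L. mink_avg K L \<subseteq> cball (m - u) 1" by auto
qed

section \<open>Hausdorff distance\<close>

definition hausdorff_radii :: "'a::metric_space set \<Rightarrow> 'a set \<Rightarrow> real set" where
  "hausdorff_radii A B =
     {r. 0 < r \<and> (\<forall>x\<in>A. \<exists>y\<in>B. dist x y \<le> r) \<and> (\<forall>x\<in>B. \<exists>y\<in>A. dist x y \<le> r)}"

lemma mem_Minkowski_sum_cball: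
  fixes x :: "'a::real_normed_vector"
  shows "x \<in> {a + b | a b. a \<in> B \<and> b \<in> cball 0 r} \<longleftrightarrow> (\<exists>y\<in>B. dist x y \<le> r)"
proof
  assume "x \<in> {a + b | a b. a \<in> B \<and> b \<in> cball 0 r}"
  then obtain a b where "a \<in> B" "norm b \<le> r" "x = a + b" by auto
  then show "\<exists>y\<in>B. dist x y \<le> r" by (intro bexI[of _ a]) (auto simp: dist_norm)
next
  assume "\<exists>y\<in>B. dist x y \<le> r"
  then obtain y where "y \<in> B" "dist x y \<le> r" by blast
  then have "y \<in> B" "x - y \<in> cball 0 r" by (simp_all add: dist_norm norm_minus_commute)
  moreover have "x = y + (x - y)" by simp
  ultimately show "x \<in> {a + b | a b. a \<in> B \<and> b \<in> cball 0 r}" by blast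
qed

lemma hausdorff_distance_eq_Inf_radii: "hausdorff_distance A B = Inf (hausdorff_radii A B)"
  unfolding hausdorff_distance_def hausdorff_radii_def subset_iff mem_Minkowski_sum_cball
  by (simp only: Ball_def)

lemma hausdorff_radii_commute: "hausdorff_radii A B = hausdorff_radii B A"
  unfolding hausdorff_radii_def by (intro Collect_cong) blast

lemma hausdorff_distance_commute: "hausdorff_distance A B = hausdorff_distance B A"
  unfolding hausdorff_distance_eq_Inf_radii by (subst hausdorff_radii_commute) (rule refl)

lemma hausdorff_radii_mono:
  assumes "r \<in> hausdorff_radii A B" "r \<le> s"
  shows "s \<in> hausdorff_radii A B"
proof -
  from assms(1) have r: "0 < r" "\<forall>x\<in>A. \<exists>y\<in>B. dist x y \<le> r" "\<forall>x\<in>B. \<exists>y\<in>A. dist x y \<le> r"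
    by (simp_all add: hausdorff_radii_def)
  have "0 < s" using r(1) assms(2) by linarith
  moreover have "\<forall>x\<in>A. \<exists>y\<in>B. dist x y \<le> s" using r(2) assms(2) by (meson order_trans)
  moreover have "\<forall>x\<in>B. \<exists>y\<in>A. dist x y \<le> s" using r(3) assms(2) by (meson order_trans)
  ultimately show ?thesis by (simp add: hausdorff_radii_def)
qed

lemma hausdorff_radii_add:
  assumes "r \<in> hausdorff_radii A B" "s \<in> hausdorff_radii B C"
  shows "r + s \<in> hausdorff_radii A C"
proof -
  have chain: "\<exists>z\<in>C. dist x z \<le> r + s"
    if x: "x \<in> A" and AB: "\<forall>x\<in>A. \<exists>y\<in>B. dist x y \<le> r"
      and BC: "\<forall>y\<in>B. \<exists>z\<in>C. dist y z \<le> s"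
    for x and A B C :: "'a set" and r s
  proof -
    obtain y where "y \<in> B" "dist x y \<le> r" using x AB by blast
    moreover obtain z where "z \<in> C" "dist y z \<le> s" using BC \<open>y \<in> B\<close> by blast
    moreover have "dist x z \<le> dist x y + dist y z" by (rule dist_triangle)
    ultimately show ?thesis by (intro bexI[of _ z]) auto
  qed
  have "\<forall>x\<in>A. \<exists>z\<in>C. dist x z \<le> r + s" "\<forall>x\<in>C. \<exists>z\<in>A. dist x z \<le> s + r"
    using assms unfolding hausdorff_radii_def by (blast intro: chain)+
  moreover have "0 < r + s" using assms unfolding hausdorff_radii_def by simp
  ultimately show ?thesis unfolding hausdorff_radii_def by (simp add: add.commute)
qed

lemma hausdorff_radii_nonempty:
  assumes "bounded A" "bounded B" "A \<noteq> {}" "B \<noteq> {}"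
  shows "hausdorff_radii A B \<noteq> {}"
proof -
  have "bounded (A \<union> B)" using assms(1,2) by simp
  then obtain e where e: "\<forall>x\<in>A \<union> B. \<forall>y\<in>A \<union> B. dist x y \<le> e"
    unfolding bounded_two_points by blast
  have d: "dist x y \<le> \<bar>e\<bar> + 1" if "x \<in> A \<union> B" "y \<in> A \<union> B" for x y
  proof -
    have "dist x y \<le> e" using e that by blast
    then show ?thesis by linarith
  qed
  obtain a b where "a \<in> A" "b \<in> B" using assms(3,4) by blast
  then have "\<forall>x\<in>A. \<exists>y\<in>B. dist x y \<le> \<bar>e\<bar> + 1" "\<forall>x\<in>B. \<exists>y\<in>A. dist x y \<le> \<bar>e\<bar> + 1"
    using d by blast+
  then have "\<bar>e\<bar> + 1 \<in> hausdorff_radii A B"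
    unfolding hausdorff_radii_def by (simp add: add_nonneg_pos)
  then show ?thesis by blast
qed

lemma hausdorff_distance_le_radius:
  "r \<in> hausdorff_radii A B \<Longrightarrow> hausdorff_distance A B \<le> r"
  unfolding hausdorff_distance_eq_Inf_radii
  by (rule cInf_lower) (auto simp: hausdorff_radii_def intro: bdd_belowI[of _ 0])

lemma hausdorff_radii_gt_distance:
  assumes "hausdorff_radii A B \<noteq> {}" "hausdorff_distance A B < r"
  shows "r \<in> hausdorff_radii A B"
proof -
  have "bdd_below (hausdorff_radii A B)"
    by (auto simp: hausdorff_radii_def intro: bdd_belowI[of _ 0])
  then obtain s where "s \<in> hausdorff_radii A B" "s < r"
    using assms cInf_less_iff unfolding hausdorff_distance_eq_Inf_radii by blast
  then show ?thesis using hausdorff_radii_mono by fastforce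
qed

lemma hausdorff_distance_triangle:
  assumes "bounded A" "bounded B" "bounded C" "A \<noteq> {}" "B \<noteq> {}" "C \<noteq> {}"
  shows "hausdorff_distance A C \<le> hausdorff_distance A B + hausdorff_distance B C"
proof (rule field_le_epsilon)
  fix e :: real assume "0 < e"
  have "hausdorff_radii A B \<noteq> {}" "hausdorff_radii B C \<noteq> {}"
    using assms by (simp_all add: hausdorff_radii_nonempty)
  then have "hausdorff_distance A B + e / 2 \<in> hausdorff_radii A B"
    "hausdorff_distance B C + e / 2 \<in> hausdorff_radii B C"
    using \<open>0 < e\<close> by (simp_all add: hausdorff_radii_gt_distance)
  then have "hausdorff_distance A B + e / 2 + (hausdorff_distance B C + e / 2) \<in> hausdorff_radii A C"
    by (rule hausdorff_radii_add)
  then have "hausdorff_distance A C \<le> hausdorff_distance A B + e / 2 + (hausdorff_distance B C + e / 2)"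
    by (rule hausdorff_distance_le_radius)
  then show "hausdorff_distance A C \<le> hausdorff_distance A B + hausdorff_distance B C + e" by simp
qed

lemma hausdorff_radii_mink_avg:
  assumes "convex K0" "r \<in> hausdorff_radii K0 K1"
  shows "r / 2 \<in> hausdorff_radii K0 (mink_avg K0 K1)"
  unfolding hausdorff_radii_def
proof (intro CollectI conjI ballI)
  show "0 < r / 2" using assms(2) by (simp add: hausdorff_radii_def)
next
  fix x assume "x \<in> K0"
  then obtain y where "y \<in> K1" "dist x y \<le> r" using assms(2) by (auto simp: hausdorff_radii_def)
  moreover have "dist x ((1/2::real) *\<^sub>R (x + y)) = dist x y / 2"
  proof -
    have "x - (1/2::real) *\<^sub>R (x + y) = (1/2::real) *\<^sub>R (x - y)"
      by (simp add: algebra_simps) (simp flip: scaleR_add_left)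
    then show ?thesis by (simp add: dist_norm)
  qed
  moreover have "(1/2::real) *\<^sub>R (x + y) \<in> mink_avg K0 K1"
    using \<open>x \<in> K0\<close> \<open>y \<in> K1\<close> unfolding mem_mink_avg by blast
  ultimately show "\<exists>z\<in>mink_avg K0 K1. dist x z \<le> r / 2" by force
next
  fix z assume "z \<in> mink_avg K0 K1"
  then obtain a b where ab: "a \<in> K0" "b \<in> K1" "z = (1/2::real) *\<^sub>R (a + b)"
    unfolding mem_mink_avg by blast
  then obtain x where x: "x \<in> K0" "dist b x \<le> r" using assms(2) by (auto simp: hausdorff_radii_def)
  have "(1/2::real) *\<^sub>R (a + x) \<in> K0"
    using convexD[OF assms(1) ab(1) x(1), of "1/2" "1/2"] by (simp add: scaleR_add_right)
  moreover have "dist z ((1/2::real) *\<^sub>R (a + x)) = dist b x / 2"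
  proof -
    have "z - (1/2::real) *\<^sub>R (a + x) = (1/2::real) *\<^sub>R (b - x)"
      unfolding ab(3) by (simp add: algebra_simps)
    then show ?thesis by (simp add: dist_norm)
  qed
  ultimately show "\<exists>y\<in>K0. dist z y \<le> r / 2" using x by (intro bexI[of _ "(1/2::real) *\<^sub>R (a + x)"]) auto
qed

lemma hausdorff_distance_mink_avg_le:
  assumes "convex K0" "bounded K0" "bounded K1" "K0 \<noteq> {}" "K1 \<noteq> {}"
  shows "hausdorff_distance K0 (mink_avg K0 K1) \<le> hausdorff_distance K0 K1 / 2"
proof (rule field_le_epsilon)
  fix e :: real assume "0 < e"
  have "hausdorff_radii K0 K1 \<noteq> {}" using assms by (simp add: hausdorff_radii_nonempty)
  then have "hausdorff_distance K0 K1 + 2 * e \<in> hausdorff_radii K0 K1"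
    using \<open>0 < e\<close> by (simp add: hausdorff_radii_gt_distance)
  then have "(hausdorff_distance K0 K1 + 2 * e) / 2 \<in> hausdorff_radii K0 (mink_avg K0 K1)"
    by (rule hausdorff_radii_mink_avg[OF assms(1)])
  then show "hausdorff_distance K0 (mink_avg K0 K1) \<le> hausdorff_distance K0 K1 / 2 + e"
    using hausdorff_distance_le_radius by fastforce
qed

lemma hausdorff_distance_mink_avg:
  assumes "convex_body K0" "convex_body K1"
  shows "hausdorff_distance K0 (mink_avg K0 K1) = hausdorff_distance K0 K1 / 2"
    and "hausdorff_distance K1 (mink_avg K0 K1) = hausdorff_distance K0 K1 / 2"
proof -
  let ?M = "mink_avg K0 K1"
  have bodies: "convex K0" "convex K1" "bounded K0" "bounded K1" "bounded ?M"
    "K0 \<noteq> {}" "K1 \<noteq> {}" "?M \<noteq> {}"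
    using assms convex_body_mink_avg[OF assms] unfolding convex_body_def
    by (auto intro: compact_imp_bounded)
  have "hausdorff_distance K0 ?M \<le> hausdorff_distance K0 K1 / 2"
    using bodies by (intro hausdorff_distance_mink_avg_le)
  moreover have "hausdorff_distance K1 ?M \<le> hausdorff_distance K0 K1 / 2"
    using hausdorff_distance_mink_avg_le[of K1 K0] bodies
    by (simp add: mink_avg_commute hausdorff_distance_commute)
  moreover have "hausdorff_distance K0 K1 \<le> hausdorff_distance K0 ?M + hausdorff_distance ?M K1"
    using bodies by (intro hausdorff_distance_triangle)
  ultimately show "hausdorff_distance K0 ?M = hausdorff_distance K0 K1 / 2"
    and "hausdorff_distance K1 ?M = hausdorff_distance K0 K1 / 2"
    by (simp_all add: hausdorff_distance_commute[of ?M K1])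
qed

section \<open>Isometries and midpoints\<close>

definition hausdorff_midpoints :: "'a::euclidean_space set \<Rightarrow> 'a set \<Rightarrow> 'a set set" where
  "hausdorff_midpoints K0 K1 = {M \<in> ball_bodies.
     hausdorff_distance K0 M = hausdorff_distance K0 K1 / 2 \<and>
     hausdorff_distance K1 M = hausdorff_distance K0 K1 / 2}"

lemma mink_avg_in_hausdorff_midpoints:
  assumes "K0 \<in> ball_bodies" "K1 \<in> ball_bodies"
  shows "mink_avg K0 K1 \<in> hausdorff_midpoints K0 K1"
  using assms mink_avg_in_ball_bodies hausdorff_distance_mink_avg[of K0 K1]
  unfolding hausdorff_midpoints_def ball_bodies_def by blast

lemma cute_pair_iff_hausdorff_midpoints:
  "cute_pair K0 K1 \<longleftrightarrow>
     K0 \<in> ball_bodies \<and> K1 \<in> ball_bodies \<and> hausdorff_midpoints K0 K1 = {mink_avg K0 K1}"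
  using mink_avg_in_hausdorff_midpoints[of K0 K1]
  unfolding cute_pair_def hausdorff_midpoints_def by blast

lemma isometry_image_hausdorff_midpoints:
  fixes T :: "'a::euclidean_space set \<Rightarrow> 'a set"
  assumes bij: "bij_betw T ball_bodies ball_bodies"
    and iso: "\<forall>K\<in>ball_bodies. \<forall>L\<in>ball_bodies. hausdorff_distance (T K) (T L) = hausdorff_distance K L"
    and "K0 \<in> ball_bodies" "K1 \<in> ball_bodies"
  shows "T ` hausdorff_midpoints K0 K1 = hausdorff_midpoints (T K0) (T K1)"
proof -
  have "T M \<in> hausdorff_midpoints (T K0) (T K1) \<longleftrightarrow> M \<in> hausdorff_midpoints K0 K1"
    if "M \<in> ball_bodies" for M
    using that assms bij_betwE[OF bij] unfolding hausdorff_midpoints_def by auto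
  moreover have "hausdorff_midpoints (T K0) (T K1) \<subseteq> T ` ball_bodies"
    using bij unfolding hausdorff_midpoints_def bij_betw_def by blast
  moreover have "hausdorff_midpoints K0 K1 \<subseteq> ball_bodies"
    unfolding hausdorff_midpoints_def by blast
  ultimately show ?thesis by blast
qed

theorem lemma4:
  fixes T :: "'a::euclidean_space set \<Rightarrow> 'a set"
    and K0 K1 :: "'a set"
  assumes "bij_betw T ball_bodies ball_bodies"
    and "\<forall>K\<in>ball_bodies. \<forall>L\<in>ball_bodies. hausdorff_distance (T K) (T L) = hausdorff_distance K L"
    and "cute_pair K0 K1"
  shows "cute_pair (T K0) (T K1) \<and> T (mink_avg K0 K1) = mink_avg (T K0) (T K1)"
proof -
  have K: "K0 \<in> ball_bodies" "K1 \<in> ball_bodies"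
    and mid: "hausdorff_midpoints K0 K1 = {mink_avg K0 K1}"
    using assms(3) unfolding cute_pair_iff_hausdorff_midpoints by auto
  have TK: "T K0 \<in> ball_bodies" "T K1 \<in> ball_bodies"
    using K bij_betwE[OF assms(1)] by auto
  have Tmid: "hausdorff_midpoints (T K0) (T K1) = {T (mink_avg K0 K1)}"
    using isometry_image_hausdorff_midpoints[OF assms(1,2) K] mid by simp
  moreover have "mink_avg (T K0) (T K1) \<in> hausdorff_midpoints (T K0) (T K1)"
    using TK by (rule mink_avg_in_hausdorff_midpoints)
  ultimately have "T (mink_avg K0 K1) = mink_avg (T K0) (T K1)" by simp
  with TK Tmid show ?thesis unfolding cute_pair_iff_hausdorff_midpoints by simp
qed

end
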